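(* Let $\beta>0$, $\gamma\ge0$, $0\le q<s<\infty$, and let $\mu$ be a finite positive Borel measure on $[0,1)$. The following are equivalent: (1) $\mu$ is a $\gamma$-logarithmic $s$-Carleson measure; (2) $\displaystyle\sup_{w\in\mathbb{D}}\int_{[0,1)}\frac{(1-|w|)^\beta\log^\gamma\frac{e}{1-|w|}}{(1-t)^q(1-|w|t)^{s+\beta-q}}\,d\mu(t)<\infty$; (3) $\displaystyle\sup_{w\in\mathbb{D}}\int_{[0,1)}\frac{(1-|w|)^\beta\log^\gamma\frac{e}{1-|w|}}{(1-t)^q|1-wt|^{s+\beta-q}}\,d\mu(t)<\infty$; (4) $\displaystyle\sup_{w\in\mathbb{D}}\int_{[0,1)}\frac{(1-|w|)^\beta\log^\gamma\frac{e}{1-t}}{(1-t)^q(1-|w|t)^{s+\beta-q}}\,d\mu(t)<\infty$.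
   Context: $\mathbb{D}$ is the open unit disc. For $\gamma\ge0$ and $s>0$, a finite positive Borel measure $\mu$ on $[0,1)$ is a $\gamma$-logarithmic $s$-Carleson measure if there is $C>0$ with $\log^\gamma\!\big(\frac{e}{1-t}\big)\mu([t,1))\le C(1-t)^s$ for all $t\in[0,1)$. *)

theory Defs
  imports "HOL-Analysis.Analysis"
begin

definition fin_borel_measure_on_01 :: "real measure \<Rightarrow> bool" where
  "fin_borel_measure_on_01 \<mu> \<longleftrightarrow>
     sets \<mu> = sets borel \<and> finite_measure \<mu> \<and> emeasure \<mu> (- {0..<1}) = 0"

definition log_carleson :: "real \<Rightarrow> real \<Rightarrow> real measure \<Rightarrow> bool" where
  "log_carleson \<gamma> s \<mu> \<longleftrightarrow>
     (\<exists>C>0. \<forall>t\<in>{0..<1::real}.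
        (ln (exp 1 / (1 - t))) powr \<gamma> * measure \<mu> {t..<1} \<le> C * (1 - t) powr s)"

end

theory Submission
  imports Defs "HOL-Real_Asymp.Real_Asymp"
begin

text \<open>
  Carleson implies (2) and (4): cut \<open>[0,1)\<close> into the dyadic shells
  \<open>2^-(k+1) < 1 - t \<le> 2^-k\<close>. On shell \<open>k\<close> the kernel is bounded by its value at the
  inner end of the shell, and the Carleson condition gives
  \<open>\<mu>[1 - 2^-k, 1) \<lesssim> 2^-ks / (1 + k log 2)^\<gamma>\<close>. If \<open>2^-(K+1) < 1 - |w| \<le> 2^-K\<close>, the
  resulting series decays like \<open>2^-(K-k)\<beta>\<close> (times a power of \<open>K - k\<close> coming from the
  logarithms) for \<open>k \<le> K\<close> and like \<open>2^-(k-K)(s-q)\<close> for \<open>k > K\<close>, so it is bounded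
  uniformly in \<open>w\<close>. Kernel (3) is dominated by (2) because \<open>|1 - w t| \<ge> 1 - |w| t\<close>.
  Conversely, for real \<open>w = r\<close> all three kernels are at least
  \<open>log^\<gamma>(e/(1-r)) / (2^(s+\<beta>-q) (1-r)^s)\<close> on \<open>[r, 1)\<close>, so boundedness of the
  integrals gives the Carleson condition.
\<close>

lemma ln_exp_div: "0 < x \<Longrightarrow> ln (exp 1 / x) = 1 - ln (x::real)"
  by (subst ln_div) auto

lemma one_le_ln_exp_div: "0 < x \<Longrightarrow> x \<le> 1 \<Longrightarrow> 1 \<le> ln (exp 1 / (x::real))"
  by (simp add: ln_exp_div)

lemma ln_exp_div_antimono: "0 < x \<Longrightarrow> x \<le> y \<Longrightarrow> ln (exp 1 / y) \<le> ln (exp 1 / (x::real))"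
  by (simp add: ln_exp_div)

lemma one_le_ln_exp_div_one_minus: "t \<in> {0..<1} \<Longrightarrow> 1 \<le> ln (exp 1 / (1 - t::real))"
  by (rule one_le_ln_exp_div) auto

lemma ln_exp_div_dyadic: "ln (exp 1 / 2 powr - real k) = 1 + real k * ln 2"
  by (simp add: ln_exp_div)

lemma dyadic_ratio: "2 powr - real i / 2 powr - real j = 2 powr (real j - real i)"
  by (simp add: powr_diff[symmetric])

lemma dyadic_Suc: "2 powr - real (Suc k) = 2 powr - real k / 2"
proof -
  have "(2::real) powr (1 + (- 1 - real k)) = 2 powr 1 * 2 powr (- 1 - real k)"
    by (rule powr_add)
  then show ?thesis by simp
qed

lemma dyadic_scale_exists:
  fixes x :: real
  assumes "0 < x" "x \<le> 1"
  obtains k :: nat where "2 powr - real (Suc k) < x" "x \<le> 2 powr - real k"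
proof -
  define k where "k = nat \<lfloor>- log 2 x\<rfloor>"
  have "0 \<le> - log 2 x" using assms by simp
  then have "real k \<le> - log 2 x" "- log 2 x < real (Suc k)"
    unfolding k_def by linarith+
  then have "2 powr - real (Suc k) < 2 powr log 2 x" "2 powr log 2 x \<le> 2 powr - real k"
    by simp_all
  with assms that show ?thesis by simp
qed

lemma summable_powr_times_exp_decay:
  fixes \<beta> \<gamma> c :: real
  assumes "0 < \<beta>" "0 \<le> c"
  shows "summable (\<lambda>j::nat. (c + real j) powr \<gamma> * 2 powr (- real j * \<beta>))"
proof (rule summable_comparison_test_bigo)
  show "summable (\<lambda>j::nat. norm (real j powr -2))"
    by (simp add: summable_real_powr_iff)
  show "(\<lambda>j::nat. (c + real j) powr \<gamma> * 2 powr (- real j * \<beta>)) \<in> O(\<lambda>j. real j powr -2)"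
    using assms by real_asymp
qed

lemma sum_comp_le_suminf:
  fixes f :: "nat \<Rightarrow> real"
  assumes "summable f" "\<And>j. 0 \<le> f j" "finite A" "inj_on h A"
  shows "(\<Sum>k\<in>A. f (h k)) \<le> suminf f"
proof -
  have "(\<Sum>k\<in>A. f (h k)) = sum f (h ` A)"
    using assms(4) by (simp add: sum.reindex)
  also have "\<dots> \<le> suminf f"
    using assms by (intro sum_le_suminf) auto
  finally show ?thesis .
qed

lemma sum_le_two_sided_suminf:
  fixes T f g :: "nat \<Rightarrow> real"
  assumes "summable f" "summable g" "\<And>j. 0 \<le> f j" "\<And>j. 0 \<le> g j"
    and left: "\<And>k. k \<le> K \<Longrightarrow> T k \<le> f (K - k)"
    and right: "\<And>k. K < k \<Longrightarrow> T k \<le> g (k - Suc K)"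
  shows "(\<Sum>k<n. T k) \<le> suminf f + suminf g"
proof -
  let ?A = "{..<n} \<inter> {..K}" and ?B = "{..<n} \<inter> {K<..}"
  have "(\<Sum>k<n. T k) = sum T (?A \<union> ?B)"
    by (rule sum.cong) auto
  also have "\<dots> = sum T ?A + sum T ?B"
    by (rule sum.union_disjoint) auto
  finally have split: "(\<Sum>k<n. T k) = sum T ?A + sum T ?B" .
  have "sum T ?A \<le> (\<Sum>k\<in>?A. f (K - k))"
    by (intro sum_mono left) auto
  also have "\<dots> \<le> suminf f"
    using assms by (intro sum_comp_le_suminf) (auto simp: inj_on_def)
  finally have A: "sum T ?A \<le> suminf f" .
  have "sum T ?B \<le> (\<Sum>k\<in>?B. g (k - Suc K))"
    by (intro sum_mono right) auto
  also have "\<dots> \<le> suminf g"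
    using assms by (intro sum_comp_le_suminf) (auto simp: inj_on_def)
  finally have B: "sum T ?B \<le> suminf g" .
  from split A B show ?thesis by linarith
qed

lemma dyadic_log_ratio_le:
  fixes L :: real and k K :: nat
  assumes "L \<le> 1 + real (Suc K) * ln 2"
  shows "(L + 1 + real (Suc k) * ln 2) / (1 + real k * ln 2) \<le> 4 + real (K - k)"
proof -
  define l where "l = 1 + real k * ln 2"
  define j where "j = real (K - k)"
  have l: "1 \<le> l" and j: "0 \<le> j" by (simp_all add: l_def j_def)
  have ln2: "ln (2::real) \<le> 1"
    using ln_le_minus_one[of 2] by simp
  have "real (Suc K) * ln 2 \<le> (real k + (j + 1)) * ln 2"
    unfolding j_def by (intro mult_right_mono) (cases "k \<le> K", auto)
  also have "\<dots> \<le> real k * ln 2 + (j + 1)"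
    using mult_left_le[OF ln2 j] ln2 by (simp add: distrib_right)
  finally have "L \<le> l + j + 1"
    using assms by (simp add: l_def)
  moreover have "1 + real (Suc k) * ln 2 \<le> l + 1"
    using ln2 by (simp add: l_def algebra_simps)
  moreover have "j \<le> l * j"
    using l j by (simp add: mult_le_cancel_right1)
  ultimately have "L + 1 + real (Suc k) * ln 2 \<le> (4 + j) * l"
    using l by (simp add: algebra_simps)
  then have "(L + 1 + real (Suc k) * ln 2) / l \<le> 4 + j"
    using l by (simp add: pos_divide_le_eq)
  then show ?thesis
    by (simp add: l_def j_def)
qed

lemma dyadic_weight_le:
  fixes x y \<beta> q s :: real
  assumes x: "0 < x" and y: "0 < y" and e: "0 \<le> s + \<beta> - q"
  shows "x powr \<beta> * y powr s / ((y / 2) powr q * max x (y / 2) powr (s + \<beta> - q))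
           \<le> 2 powr (s + \<beta>) * (x / y) powr \<beta>"
    and "x powr \<beta> * y powr s / ((y / 2) powr q * max x (y / 2) powr (s + \<beta> - q))
           \<le> 2 powr q * (y / x) powr (s - q)"
proof -
  let ?e = "s + \<beta> - q"
  have "(y / 2) powr q * (y / 2) powr ?e \<le> (y / 2) powr q * max x (y / 2) powr ?e"
    using y e by (intro mult_left_mono powr_mono2) auto
  then have "x powr \<beta> * y powr s / ((y / 2) powr q * max x (y / 2) powr ?e)
      \<le> x powr \<beta> * y powr s / ((y / 2) powr q * (y / 2) powr ?e)"
    using y by (intro divide_left_mono) auto
  also have "\<dots> = 2 powr (s + \<beta>) * (x / y) powr \<beta>"
  proof -
    have "(y / 2) powr q * (y / 2) powr ?e = (y / 2) powr (s + \<beta>)"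
      by (simp add: powr_add[symmetric])
    also have "\<dots> = y powr s * y powr \<beta> / 2 powr (s + \<beta>)"
      using y by (simp add: powr_divide powr_add)
    finally show ?thesis
      using x y by (simp add: powr_divide field_simps)
  qed
  finally show "x powr \<beta> * y powr s / ((y / 2) powr q * max x (y / 2) powr ?e)
      \<le> 2 powr (s + \<beta>) * (x / y) powr \<beta>" .
  have "(y / 2) powr q * x powr ?e \<le> (y / 2) powr q * max x (y / 2) powr ?e"
    using x e by (intro mult_left_mono powr_mono2) auto
  then have "x powr \<beta> * y powr s / ((y / 2) powr q * max x (y / 2) powr ?e)
      \<le> x powr \<beta> * y powr s / ((y / 2) powr q * x powr ?e)"
    using x y by (intro divide_left_mono) auto
  also have "\<dots> = 2 powr q * (y / x) powr (s - q)"
  proof -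
    have "x powr ?e = x powr \<beta> * x powr (s - q)" and "y powr s = y powr q * y powr (s - q)"
      by (simp_all add: powr_add[symmetric] algebra_simps)
    then show ?thesis
      using x y by (simp add: powr_divide field_simps)
  qed
  finally show "x powr \<beta> * y powr s / ((y / 2) powr q * max x (y / 2) powr ?e)
      \<le> 2 powr q * (y / x) powr (s - q)" .
qed

lemma dyadic_weight_decay:
  fixes d \<beta> q s :: real and k K :: nat
  assumes K: "2 powr - real (Suc K) < d" "d \<le> 2 powr - real K" and \<beta>: "0 < \<beta>" and qs: "q < s"
  shows "k \<le> K \<Longrightarrow> d powr \<beta> * (2 powr - real k) powr s /
        ((2 powr - real (Suc k)) powr q * max d (2 powr - real (Suc k)) powr (s + \<beta> - q))
      \<le> 2 powr (s + \<beta>) * 2 powr (- real (K - k) * \<beta>)"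
    and "K < k \<Longrightarrow> d powr \<beta> * (2 powr - real k) powr s /
        ((2 powr - real (Suc k)) powr q * max d (2 powr - real (Suc k)) powr (s + \<beta> - q))
      \<le> 2 powr q * 2 powr (- real (k - Suc K) * (s - q))"
proof -
  have d: "0 < d"
    using K(1) powr_gt_zero[of 2 "- real (Suc K)"] by linarith
  note weight = dyadic_weight_le[OF d, of "2 powr - real k" s \<beta> q, folded dyadic_Suc]
  let ?W = "d powr \<beta> * (2 powr - real k) powr s /
        ((2 powr - real (Suc k)) powr q * max d (2 powr - real (Suc k)) powr (s + \<beta> - q))"
  show "?W \<le> 2 powr (s + \<beta>) * 2 powr (- real (K - k) * \<beta>)" if "k \<le> K"
  proof -
    have "d / 2 powr - real k \<le> 2 powr - real K / 2 powr - real k"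
      using K d by (simp add: divide_right_mono)
    also have "\<dots> = 2 powr - real (K - k)"
      unfolding dyadic_ratio using that by (simp add: of_nat_diff)
    finally have "(d / 2 powr - real k) powr \<beta> \<le> (2 powr - real (K - k)) powr \<beta>"
      using d \<beta> by (intro powr_mono2) auto
    have "?W \<le> 2 powr (s + \<beta>) * (d / 2 powr - real k) powr \<beta>"
      using qs \<beta> by (intro weight(1)) auto
    also have "\<dots> \<le> 2 powr (s + \<beta>) * 2 powr (- real (K - k) * \<beta>)"
      using \<open>(d / 2 powr - real k) powr \<beta> \<le> _\<close> by (simp add: powr_powr)
    finally show ?thesis .
  qed
  show "?W \<le> 2 powr q * 2 powr (- real (k - Suc K) * (s - q))" if "K < k"
  proof -
    have "2 powr - real k / d \<le> 2 powr - real k / 2 powr - real (Suc K)"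
      using K d by (intro divide_left_mono) auto
    also have "\<dots> = 2 powr - real (k - Suc K)"
      unfolding dyadic_ratio using that by (simp add: of_nat_diff)
    finally have "(2 powr - real k / d) powr (s - q) \<le> (2 powr - real (k - Suc K)) powr (s - q)"
      using d qs by (intro powr_mono2) auto
    have "?W \<le> 2 powr q * (2 powr - real k / d) powr (s - q)"
      using qs \<beta> by (intro weight(2)) auto
    also have "\<dots> \<le> 2 powr q * 2 powr (- real (k - Suc K) * (s - q))"
      using \<open>(2 powr - real k / d) powr (s - q) \<le> _\<close> by (simp add: powr_powr)
    finally show ?thesis .
  qed
qed

text \<open>Term \<open>k\<close> bounds the contribution of the \<open>k\<close>-th shell once the Carleson estimate
  for \<open>\<mu>[1 - 2^-k, 1)\<close> is inserted; \<open>d\<close> stands for \<open>1 - |w|\<close>.\<close>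

lemma dyadic_series_bounded:
  fixes \<beta> \<gamma> q s :: real
  assumes \<beta>: "0 < \<beta>" and \<gamma>: "0 \<le> \<gamma>" and qs: "q < s"
  obtains M where "\<And>d n. 0 < d \<Longrightarrow> d \<le> 1 \<Longrightarrow>
    (\<Sum>k<n. ((ln (exp 1 / d) + 1 + real (Suc k) * ln 2) / (1 + real k * ln 2)) powr \<gamma> *
       (d powr \<beta> * (2 powr - real k) powr s /
        ((2 powr - real (Suc k)) powr q * max d (2 powr - real (Suc k)) powr (s + \<beta> - q)))) \<le> M"
proof -
  define f where "f j = (4 + real j) powr \<gamma> * (2 powr (s + \<beta>) * 2 powr (- real j * \<beta>))"
    for j :: nat
  define g where "g j = 4 powr \<gamma> * (2 powr q * 2 powr (- real j * (s - q)))" for j :: nat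
  have "summable f"
    unfolding f_def[abs_def] using summable_powr_times_exp_decay[OF \<beta>, of 4 \<gamma>]
    by (simp add: mult_ac)
  moreover have "summable g"
    unfolding g_def[abs_def] using summable_powr_times_exp_decay[of "s - q" 4 0] qs
    by (simp add: mult_ac)
  moreover have "0 \<le> f j" "0 \<le> g j" for j
    by (simp_all add: f_def g_def)
  show ?thesis
  proof (rule that)
    fix d :: real and n :: nat
    assume d: "0 < d" "d \<le> 1"
    then obtain K where K: "2 powr - real (Suc K) < d" "d \<le> 2 powr - real K"
      by (rule dyadic_scale_exists)
    have L: "ln (exp 1 / d) \<le> 1 + real (Suc K) * ln 2"
      using ln_exp_div_antimono[OF _ less_imp_le[OF K(1)]] unfolding ln_exp_div_dyadic by simp
    define R where "R k = (ln (exp 1 / d) + 1 + real (Suc k) * ln 2) / (1 + real k * ln 2)" for k :: nat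
    define W where "W k = d powr \<beta> * (2 powr - real k) powr s /
        ((2 powr - real (Suc k)) powr q * max d (2 powr - real (Suc k)) powr (s + \<beta> - q))" for k :: nat
    have R: "R k powr \<gamma> \<le> (4 + real (K - k)) powr \<gamma>" for k
    proof -
      have "1 \<le> ln (exp 1 / d)"
        using d by (rule one_le_ln_exp_div)
      then have "0 \<le> R k"
        by (simp add: R_def add_pos_nonneg)
      then show ?thesis
        using \<gamma> dyadic_log_ratio_le[OF L] by (simp add: R_def powr_mono2)
    qed
    have W0: "0 \<le> W k" for k
      by (simp add: W_def)
    have "(\<Sum>k<n. R k powr \<gamma> * W k) \<le> suminf f + suminf g"
    proof (rule sum_le_two_sided_suminf[where K = K])
      fix k assume "k \<le> K"
      then show "R k powr \<gamma> * W k \<le> f (K - k)"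
        unfolding f_def W_def using R[of k] W0[of k] dyadic_weight_decay(1)[OF K \<beta> qs]
        by (intro mult_mono) (auto simp: W_def)
    next
      fix k assume "K < k"
      then show "R k powr \<gamma> * W k \<le> g (k - Suc K)"
        unfolding g_def W_def using R[of k] W0[of k] dyadic_weight_decay(2)[OF K \<beta> qs]
        by (intro mult_mono) (auto simp: W_def)
    qed fact+
    then show "(\<Sum>k<n. ((ln (exp 1 / d) + 1 + real (Suc k) * ln 2) / (1 + real k * ln 2)) powr \<gamma> *
       (d powr \<beta> * (2 powr - real k) powr s /
        ((2 powr - real (Suc k)) powr q * max d (2 powr - real (Suc k)) powr (s + \<beta> - q))))
      \<le> suminf f + suminf g"
      by (simp add: R_def W_def)
  qed
qed

lemma log_carleson_dyadic_tail:
  fixes \<mu> :: "real measure"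
  assumes "log_carleson \<gamma> s \<mu>"
  obtains C where "0 < C"
    "\<And>k::nat. measure \<mu> {1 - 2 powr - real k..<1}
        \<le> C * (2 powr - real k) powr s / (1 + real k * ln 2) powr \<gamma>"
proof -
  obtain C where "0 < C" and C: "\<And>t. t \<in> {0..<1::real} \<Longrightarrow>
      ln (exp 1 / (1 - t)) powr \<gamma> * measure \<mu> {t..<1} \<le> C * (1 - t) powr s"
    using assms unfolding log_carleson_def by blast
  have "measure \<mu> {1 - 2 powr - real k..<1}
      \<le> C * (2 powr - real k) powr s / (1 + real k * ln 2) powr \<gamma>" for k :: nat
  proof -
    have "(2::real) powr - real k \<le> 1"
      using powr_mono[of "- real k" 0 2] by simp
    then have "1 - 2 powr - real k \<in> {0..<1::real}"
      by simp
    from C[OF this] have "(1 + real k * ln 2) powr \<gamma> * measure \<mu> {1 - 2 powr - real k..<1}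
        \<le> C * (2 powr - real k) powr s"
      by (simp only: diff_diff_eq2 add_diff_cancel_left' ln_exp_div_dyadic)
    moreover have "0 < 1 + real k * ln 2"
      by (simp add: add_pos_nonneg)
    ultimately show ?thesis
      by (simp add: pos_le_divide_eq mult.commute)
  qed
  with \<open>0 < C\<close> that show ?thesis by blast
qed

lemma nn_integral_le_dyadic_sum:
  fixes \<mu> :: "real measure" and f :: "real \<Rightarrow> real" and c :: "nat \<Rightarrow> real"
  assumes sets: "sets \<mu> = sets borel"
    and shell: "\<And>k t. t \<in> {0..<1} \<Longrightarrow> 2 powr - real (Suc k) < 1 - t \<Longrightarrow> 1 - t \<le> 2 powr - real k \<Longrightarrow>
      f t \<le> c k"
  shows "(\<integral>\<^sup>+ t\<in>{0..<1}. ennreal (f t) \<partial>\<mu>)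
      \<le> (\<Sum>k. ennreal (c k) * emeasure \<mu> {1 - 2 powr - real k..<1})"
proof -
  let ?tail = "\<lambda>k::nat. {1 - 2 powr - real k..<1::real}"
  have "ennreal (f t) * indicator {0..<1} t \<le> (\<Sum>k. ennreal (c k) * indicator (?tail k) t)" for t
  proof (cases "t \<in> {0..<1}")
    case True
    then obtain k where k: "2 powr - real (Suc k) < 1 - t" "1 - t \<le> 2 powr - real k"
      using dyadic_scale_exists[of "1 - t"] by auto
    with True have "ennreal (f t) * indicator {0..<1} t \<le> ennreal (c k) * indicator (?tail k) t"
      using shell[OF True k] by (simp add: ennreal_leI)
    also have "\<dots> \<le> (\<Sum>k. ennreal (c k) * indicator (?tail k) t)"
      using sum_le_suminf[OF summableI, of "{k}" "\<lambda>k. ennreal (c k) * indicator (?tail k) t"]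
      by (simp only: sum.insert sum.empty empty_iff finite.intros zero_le simp_thms add_0_right)
    finally show ?thesis .
  qed simp
  then have "(\<integral>\<^sup>+ t\<in>{0..<1}. ennreal (f t) \<partial>\<mu>)
      \<le> (\<integral>\<^sup>+ t. (\<Sum>k. ennreal (c k) * indicator (?tail k) t) \<partial>\<mu>)"
    by (rule nn_integral_mono)
  also have "\<dots> = (\<Sum>k. \<integral>\<^sup>+ t. ennreal (c k) * indicator (?tail k) t \<partial>\<mu>)"
    by (rule nn_integral_suminf) (simp add: measurable_cong_sets[OF sets refl])
  also have "\<dots> = (\<Sum>k. ennreal (c k) * emeasure \<mu> (?tail k))"
    using sets by (simp add: nn_integral_cmult_indicator)
  finally show ?thesis .
qed

lemma suminf_emeasure_le:
  fixes \<mu> :: "'a measure" and A :: "nat \<Rightarrow> 'a set"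
  assumes "finite_measure \<mu>" and b: "\<And>k. measure \<mu> (A k) \<le> b k" and c: "\<And>k. 0 \<le> c k"
    and M: "\<And>n. (\<Sum>k<n. c k * b k) \<le> M"
  shows "(\<Sum>k. ennreal (c k) * emeasure \<mu> (A k)) \<le> ennreal M"
  unfolding suminf_eq_SUP
proof (rule SUP_least)
  fix n
  have b0: "0 \<le> b k" for k
    using b[of k] measure_nonneg[of \<mu> "A k"] by linarith
  have "ennreal (c k) * emeasure \<mu> (A k) \<le> ennreal (c k * b k)" for k
  proof -
    have "emeasure \<mu> (A k) \<le> ennreal (b k)"
      using assms(1) b[of k] by (simp add: finite_measure.emeasure_eq_measure ennreal_leI)
    then show ?thesis
      using c[of k] b0[of k] by (simp add: ennreal_mult mult_left_mono)
  qed
  then have "(\<Sum>k<n. ennreal (c k) * emeasure \<mu> (A k)) \<le> (\<Sum>k<n. ennreal (c k * b k))"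
    by (rule sum_mono)
  also have "\<dots> = ennreal (\<Sum>k<n. c k * b k)"
    using c b0 by (intro sum_ennreal) auto
  also have "\<dots> \<le> ennreal M"
    using M by (rule ennreal_leI)
  finally show "(\<Sum>k<n. ennreal (c k) * emeasure \<mu> (A k)) \<le> ennreal M" .
qed

lemma kernel_le_dyadic_coefficient:
  fixes r t \<theta> \<beta> \<gamma> q s :: real
  assumes r: "0 \<le> r" "r < 1" and t: "0 \<le> t" "2 powr - real (Suc k) < 1 - t"
    and \<theta>: "0 \<le> \<theta>" "\<theta> \<le> ln (exp 1 / (1 - r)) + ln (exp 1 / (1 - t))"
    and "0 \<le> \<gamma>" "0 \<le> q" "0 \<le> s + \<beta> - q"
  shows "(1 - r) powr \<beta> * \<theta> powr \<gamma> / ((1 - t) powr q * (1 - r * t) powr (s + \<beta> - q))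
    \<le> (1 - r) powr \<beta> * (ln (exp 1 / (1 - r)) + 1 + real (Suc k) * ln 2) powr \<gamma> /
       ((2 powr - real (Suc k)) powr q * max (1 - r) (2 powr - real (Suc k)) powr (s + \<beta> - q))"
proof (rule frac_le)
  have "ln (exp 1 / (1 - t)) \<le> ln (exp 1 / 2 powr - real (Suc k))"
    using t by (intro ln_exp_div_antimono) auto
  then have "\<theta> \<le> ln (exp 1 / (1 - r)) + 1 + real (Suc k) * ln 2"
    using \<theta>(2) unfolding ln_exp_div_dyadic by linarith
  then show "(1 - r) powr \<beta> * \<theta> powr \<gamma>
      \<le> (1 - r) powr \<beta> * (ln (exp 1 / (1 - r)) + 1 + real (Suc k) * ln 2) powr \<gamma>"
    using assms by (intro mult_left_mono powr_mono2) auto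
  have "0 < (2::real) powr - real (Suc k)"
    by simp
  then have "t \<le> 1"
    using t by linarith
  then have "r * t \<le> r" "r * t \<le> t"
    using r t by (simp_all add: mult_left_le mult_left_le_one_le)
  then have "max (1 - r) (2 powr - real (Suc k)) \<le> 1 - r * t"
    using t by auto
  then show "(2 powr - real (Suc k)) powr q * max (1 - r) (2 powr - real (Suc k)) powr (s + \<beta> - q)
      \<le> (1 - t) powr q * (1 - r * t) powr (s + \<beta> - q)"
    using assms by (intro mult_mono powr_mono2) auto
qed (use r in auto)

lemma kernel_integral_le_dyadic_series:
  fixes \<beta> \<gamma> q s r C M :: real and \<mu> :: "real measure" and \<theta> :: "real \<Rightarrow> real"
  assumes \<gamma>: "0 \<le> \<gamma>" and q: "0 \<le> q" "q \<le> s + \<beta>"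
    and sets: "sets \<mu> = sets borel" and fm: "finite_measure \<mu>"
    and "0 < C" and C: "\<And>k. measure \<mu> {1 - 2 powr - real k..<1}
      \<le> C * (2 powr - real k) powr s / (1 + real k * ln 2) powr \<gamma>"
    and r: "r \<in> {0..<1}"
    and \<theta>: "\<And>t. t \<in> {0..<1} \<Longrightarrow> 0 \<le> \<theta> t \<and> \<theta> t \<le> ln (exp 1 / (1 - r)) + ln (exp 1 / (1 - t))"
    and M: "\<And>n. (\<Sum>k<n. ((ln (exp 1 / (1 - r)) + 1 + real (Suc k) * ln 2) / (1 + real k * ln 2)) powr \<gamma> *
       ((1 - r) powr \<beta> * (2 powr - real k) powr s /
        ((2 powr - real (Suc k)) powr q * max (1 - r) (2 powr - real (Suc k)) powr (s + \<beta> - q)))) \<le> M"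
  shows "(\<integral>\<^sup>+ t\<in>{0..<1}. ennreal ((1 - r) powr \<beta> * \<theta> t powr \<gamma> /
        ((1 - t) powr q * (1 - r * t) powr (s + \<beta> - q))) \<partial>\<mu>) \<le> ennreal (C * M)"
proof -
  define d where "d = 1 - r"
  have d: "0 < d" "d \<le> 1" using r by (simp_all add: d_def)
  define \<Lambda> where "\<Lambda> k = ln (exp 1 / d) + 1 + real (Suc k) * ln 2" for k :: nat
  define m where "m k = (2 powr - real (Suc k)) powr q * max d (2 powr - real (Suc k)) powr (s + \<beta> - q)"
    for k :: nat
  define c where "c k = d powr \<beta> * \<Lambda> k powr \<gamma> / m k" for k :: nat
  have \<Lambda>: "0 < \<Lambda> k" for k
    using one_le_ln_exp_div[OF d] by (simp add: \<Lambda>_def add_pos_nonneg)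
  have "(\<integral>\<^sup>+ t\<in>{0..<1}. ennreal ((1 - r) powr \<beta> * \<theta> t powr \<gamma> /
      ((1 - t) powr q * (1 - r * t) powr (s + \<beta> - q))) \<partial>\<mu>)
    \<le> (\<Sum>k. ennreal (c k) * emeasure \<mu> {1 - 2 powr - real k..<1})"
  proof (rule nn_integral_le_dyadic_sum[OF sets])
    fix k t assume "t \<in> {0..<1}" "2 powr - real (Suc k) < 1 - t"
    then show "(1 - r) powr \<beta> * \<theta> t powr \<gamma> / ((1 - t) powr q * (1 - r * t) powr (s + \<beta> - q)) \<le> c k"
      unfolding c_def \<Lambda>_def m_def d_def using \<gamma> q r \<theta> by (intro kernel_le_dyadic_coefficient) auto
  qed
  also have "\<dots> \<le> ennreal (C * M)"
  proof (rule suminf_emeasure_le[OF fm C])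
    show "0 \<le> c k" for k
      using \<Lambda>[of k] d by (simp add: c_def m_def)
    fix n
    have "c k * (C * (2 powr - real k) powr s / (1 + real k * ln 2) powr \<gamma>)
        = C * ((\<Lambda> k / (1 + real k * ln 2)) powr \<gamma> * (d powr \<beta> * (2 powr - real k) powr s / m k))" for k
      using \<Lambda>[of k] by (simp add: c_def powr_divide add_pos_nonneg mult_ac)
    then have "(\<Sum>k<n. c k * (C * (2 powr - real k) powr s / (1 + real k * ln 2) powr \<gamma>))
        = C * (\<Sum>k<n. (\<Lambda> k / (1 + real k * ln 2)) powr \<gamma> * (d powr \<beta> * (2 powr - real k) powr s / m k))"
      by (simp add: sum_distrib_left)
    also have "\<dots> \<le> C * M"
      using M[of n] \<open>0 < C\<close> by (simp add: \<Lambda>_def m_def d_def)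
    finally show "(\<Sum>k<n. c k * (C * (2 powr - real k) powr s / (1 + real k * ln 2) powr \<gamma>)) \<le> C * M" .
  qed
  finally show ?thesis .
qed

lemma log_carleson_imp_kernel_bounded:
  fixes \<beta> \<gamma> q s :: real and \<mu> :: "real measure" and \<theta> :: "real \<Rightarrow> real \<Rightarrow> real"
  assumes \<beta>: "0 < \<beta>" and \<gamma>: "0 \<le> \<gamma>" and q: "0 \<le> q" and qs: "q < s"
    and sets: "sets \<mu> = sets borel" and fm: "finite_measure \<mu>" and car: "log_carleson \<gamma> s \<mu>"
    and \<theta>: "\<And>r t. r \<in> {0..<1} \<Longrightarrow> t \<in> {0..<1} \<Longrightarrow>
       0 \<le> \<theta> r t \<and> \<theta> r t \<le> ln (exp 1 / (1 - r)) + ln (exp 1 / (1 - t))"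
  shows "\<exists>M. \<forall>r\<in>{0..<1}.
    (\<integral>\<^sup>+ t\<in>{0..<1}. ennreal ((1 - r) powr \<beta> * \<theta> r t powr \<gamma> /
        ((1 - t) powr q * (1 - r * t) powr (s + \<beta> - q))) \<partial>\<mu>) \<le> ennreal M"
proof -
  obtain C where "0 < C" and C: "\<And>k. measure \<mu> {1 - 2 powr - real k..<1}
      \<le> C * (2 powr - real k) powr s / (1 + real k * ln 2) powr \<gamma>"
    using log_carleson_dyadic_tail[OF car] by blast
  obtain M where M: "\<And>d n. 0 < d \<Longrightarrow> d \<le> 1 \<Longrightarrow>
    (\<Sum>k<n. ((ln (exp 1 / d) + 1 + real (Suc k) * ln 2) / (1 + real k * ln 2)) powr \<gamma> *
       (d powr \<beta> * (2 powr - real k) powr s /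
        ((2 powr - real (Suc k)) powr q * max d (2 powr - real (Suc k)) powr (s + \<beta> - q)))) \<le> M"
    using dyadic_series_bounded[OF \<beta> \<gamma> qs] by blast
  show ?thesis
  proof (intro exI ballI)
    fix r :: real assume r: "r \<in> {0..<1}"
    show "(\<integral>\<^sup>+ t\<in>{0..<1}. ennreal ((1 - r) powr \<beta> * \<theta> r t powr \<gamma> /
        ((1 - t) powr q * (1 - r * t) powr (s + \<beta> - q))) \<partial>\<mu>) \<le> ennreal (C * M)"
      using \<beta> qs r by (intro kernel_integral_le_dyadic_series[OF \<gamma> q _ sets fm \<open>0 < C\<close> C r \<theta> M]) auto
  qed
qed

lemma kernel_ge_on_tail:
  fixes r t \<beta> \<gamma> q s :: real
  assumes r: "0 \<le> r" "r \<le> t" "t < 1" and q: "0 \<le> q" "q \<le> s + \<beta>"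
  shows "ln (exp 1 / (1 - r)) powr \<gamma> / (2 powr (s + \<beta> - q) * (1 - r) powr s)
    \<le> (1 - r) powr \<beta> * ln (exp 1 / (1 - r)) powr \<gamma> / ((1 - t) powr q * (1 - r * t) powr (s + \<beta> - q))"
proof -
  define d where "d = 1 - r"
  have d: "0 < d" using r by (simp add: d_def)
  have "r * t \<le> t"
    using r by (simp add: mult_left_le_one_le)
  then have pos: "0 < (1 - t) powr q * (1 - r * t) powr (s + \<beta> - q)"
    using r by simp
  have "r * (1 - t) \<le> 1 - t"
    using r by (simp add: mult_left_le_one_le)
  then have "1 - r * t \<le> 2 * d"
    using r by (simp add: d_def algebra_simps)
  then have "(1 - t) powr q * (1 - r * t) powr (s + \<beta> - q) \<le> d powr q * (2 * d) powr (s + \<beta> - q)"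
    using r q \<open>r * t \<le> t\<close> by (intro mult_mono powr_mono2) (auto simp: d_def)
  also have "\<dots> = 2 powr (s + \<beta> - q) * d powr s * d powr \<beta>"
    using d by (simp add: powr_mult powr_add[symmetric] mult_ac add.commute)
  finally have "d powr \<beta> * ln (exp 1 / d) powr \<gamma> / (2 powr (s + \<beta> - q) * d powr s * d powr \<beta>)
      \<le> d powr \<beta> * ln (exp 1 / d) powr \<gamma> / ((1 - t) powr q * (1 - r * t) powr (s + \<beta> - q))"
    using pos by (intro divide_left_mono) auto
  then show ?thesis
    using d by (simp add: d_def)
qed

lemma measure_le_of_nn_integral_le:
  fixes \<mu> :: "'a measure"
  assumes "finite_measure \<mu>" "A \<in> sets \<mu>" "A \<subseteq> B" "0 \<le> c" "0 \<le> M"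
    and "\<And>x. x \<in> A \<Longrightarrow> c \<le> f x"
    and "(\<integral>\<^sup>+ x\<in>B. ennreal (f x) \<partial>\<mu>) \<le> ennreal M"
  shows "c * measure \<mu> A \<le> M"
proof -
  have "ennreal (c * measure \<mu> A) = (\<integral>\<^sup>+ x. ennreal c * indicator A x \<partial>\<mu>)"
    using assms(1,2,4) by (simp add: nn_integral_cmult_indicator finite_measure.emeasure_eq_measure ennreal_mult)
  also have "\<dots> \<le> (\<integral>\<^sup>+ x\<in>B. ennreal (f x) \<partial>\<mu>)"
    using assms(3,6) by (intro nn_integral_mono) (auto simp: indicator_def ennreal_leI)
  also have "\<dots> \<le> ennreal M"
    by (fact assms(7))
  finally show ?thesis
    using ennreal_le_iff[OF assms(5)] by blast
qed

lemma kernel_bounded_imp_log_carleson: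
  fixes \<beta> \<gamma> q s M :: real and \<mu> :: "real measure" and g :: "real \<Rightarrow> real \<Rightarrow> real"
  assumes q: "0 \<le> q" "q \<le> s + \<beta>" and sets: "sets \<mu> = sets borel" and fm: "finite_measure \<mu>"
    and bound: "\<And>r. r \<in> {0..<1} \<Longrightarrow> (\<integral>\<^sup>+ t\<in>{0..<1}. ennreal (g r t) \<partial>\<mu>) \<le> ennreal M"
    and ge: "\<And>r t. 0 \<le> r \<Longrightarrow> r \<le> t \<Longrightarrow> t < 1 \<Longrightarrow>
      (1 - r) powr \<beta> * ln (exp 1 / (1 - r)) powr \<gamma> / ((1 - t) powr q * (1 - r * t) powr (s + \<beta> - q))
        \<le> g r t"
  shows "log_carleson \<gamma> s \<mu>"
  unfolding log_carleson_def
proof (intro exI conjI ballI)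
  define M' where "M' = max M 0"
  have "0 \<le> M'" "ennreal M \<le> ennreal M'"
    by (simp_all add: M'_def ennreal_leI)
  note bound' = order_trans[OF bound \<open>ennreal M \<le> ennreal M'\<close>]
  let ?C = "2 powr (s + \<beta> - q) * M' + 1"
  show "0 < ?C"
    using \<open>0 \<le> M'\<close> by (simp add: add_nonneg_pos)
  fix r :: real assume r: "r \<in> {0..<1}"
  let ?c = "ln (exp 1 / (1 - r)) powr \<gamma> / (2 powr (s + \<beta> - q) * (1 - r) powr s)"
  have "?c * measure \<mu> {r..<1} \<le> M'"
  proof (rule measure_le_of_nn_integral_le[OF fm _ _ _ \<open>0 \<le> M'\<close> _ bound'])
    show "{r..<1} \<in> sets \<mu>"
      using sets by simp
    show "?c \<le> g r t" if "t \<in> {r..<1}" for t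
      using r that q kernel_ge_on_tail[of r t q s \<beta> \<gamma>] ge[of r t] by auto
  qed (use r in auto)
  then have "ln (exp 1 / (1 - r)) powr \<gamma> * measure \<mu> {r..<1} \<le> 2 powr (s + \<beta> - q) * M' * (1 - r) powr s"
    using r by (simp add: field_simps)
  also have "\<dots> \<le> ?C * (1 - r) powr s"
    by (simp add: distrib_right)
  finally show "ln (exp 1 / (1 - r)) powr \<gamma> * measure \<mu> {r..<1} \<le> ?C * (1 - r) powr s" .
qed

lemma SUP_lt_top_iff_bounded:
  fixes f :: "'a \<Rightarrow> ennreal"
  shows "(SUP x\<in>A. f x) < \<infinity> \<longleftrightarrow> (\<exists>M. \<forall>x\<in>A. f x \<le> ennreal M)"
proof
  assume fin: "(SUP x\<in>A. f x) < \<infinity>"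
  have "f x \<le> ennreal (enn2real (SUP x\<in>A. f x))" if "x \<in> A" for x
    using SUP_upper[OF that, of f] fin by (simp add: ennreal_enn2real less_top)
  then show "\<exists>M. \<forall>x\<in>A. f x \<le> ennreal M"
    by blast
next
  assume "\<exists>M. \<forall>x\<in>A. f x \<le> ennreal M"
  then obtain M where "\<And>x. x \<in> A \<Longrightarrow> f x \<le> ennreal M"
    by blast
  then have "(SUP x\<in>A. f x) \<le> ennreal M"
    by (rule SUP_least)
  then show "(SUP x\<in>A. f x) < \<infinity>"
    using le_less_trans by fastforce
qed

lemma SUP_ball_norm_lt_top_iff:
  fixes F :: "real \<Rightarrow> ennreal"
  shows "(SUP w\<in>ball (0::complex) 1. F (cmod w)) < \<infinity> \<longleftrightarrow> (\<exists>M. \<forall>r\<in>{0..<1}. F r \<le> ennreal M)"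
proof -
  have "(\<forall>w\<in>ball (0::complex) 1. F (cmod w) \<le> ennreal M) \<longleftrightarrow> (\<forall>r\<in>{0..<1}. F r \<le> ennreal M)" for M
  proof
    assume "\<forall>w\<in>ball (0::complex) 1. F (cmod w) \<le> ennreal M"
    then show "\<forall>r\<in>{0..<1}. F r \<le> ennreal M"
      by (metis atLeastLessThan_iff mem_ball_0 norm_of_real abs_of_nonneg)
  qed auto
  then show ?thesis
    unfolding SUP_lt_top_iff_bounded by (simp only:)
qed

text \<open>The logarithmic factor \<open>\<theta> r t\<close> covers both \<open>ln (e/(1-r))\<close> of (2) and \<open>ln (e/(1-t))\<close> of (4).\<close>

lemma log_carleson_iff_kernel_bounded:
  fixes \<beta> \<gamma> q s :: real and \<mu> :: "real measure" and \<theta> :: "real \<Rightarrow> real \<Rightarrow> real"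
  assumes \<beta>: "0 < \<beta>" and \<gamma>: "0 \<le> \<gamma>" and q: "0 \<le> q" and qs: "q < s"
    and sets: "sets \<mu> = sets borel" and fm: "finite_measure \<mu>"
    and \<theta>_le: "\<And>r t. r \<in> {0..<1} \<Longrightarrow> t \<in> {0..<1} \<Longrightarrow>
       0 \<le> \<theta> r t \<and> \<theta> r t \<le> ln (exp 1 / (1 - r)) + ln (exp 1 / (1 - t))"
    and \<theta>_ge: "\<And>r t. 0 \<le> r \<Longrightarrow> r \<le> t \<Longrightarrow> t < 1 \<Longrightarrow> ln (exp 1 / (1 - r)) \<le> \<theta> r t"
  shows "log_carleson \<gamma> s \<mu> \<longleftrightarrow> (\<exists>M. \<forall>r\<in>{0..<1}.
    (\<integral>\<^sup>+ t\<in>{0..<1}. ennreal ((1 - r) powr \<beta> * \<theta> r t powr \<gamma> /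
        ((1 - t) powr q * (1 - r * t) powr (s + \<beta> - q))) \<partial>\<mu>) \<le> ennreal M)"
    (is "_ \<longleftrightarrow> (\<exists>M. \<forall>r\<in>_. ?I r \<le> ennreal M)")
proof
  assume "log_carleson \<gamma> s \<mu>"
  then show "\<exists>M. \<forall>r\<in>{0..<1}. ?I r \<le> ennreal M"
    by (rule log_carleson_imp_kernel_bounded[OF \<beta> \<gamma> q qs sets fm _ \<theta>_le])
next
  assume "\<exists>M. \<forall>r\<in>{0..<1}. ?I r \<le> ennreal M"
  then obtain M where M: "\<And>r. r \<in> {0..<1} \<Longrightarrow> ?I r \<le> ennreal M"
    by blast
  show "log_carleson \<gamma> s \<mu>"
  proof (rule kernel_bounded_imp_log_carleson[OF _ _ sets fm M])
    fix r t :: real assume r: "0 \<le> r" "r \<le> t" "t < 1"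
    then have "1 \<le> ln (exp 1 / (1 - r))"
      by (intro one_le_ln_exp_div_one_minus) auto
    with \<theta>_ge[OF r] show "(1 - r) powr \<beta> * ln (exp 1 / (1 - r)) powr \<gamma> /
          ((1 - t) powr q * (1 - r * t) powr (s + \<beta> - q))
        \<le> (1 - r) powr \<beta> * \<theta> r t powr \<gamma> / ((1 - t) powr q * (1 - r * t) powr (s + \<beta> - q))"
      using \<gamma> by (intro divide_right_mono mult_left_mono powr_mono2) auto
  qed (use q qs \<beta> in auto)
qed

lemma log_carleson_iff_SUP_radial_kernel:
  fixes \<beta> \<gamma> q s :: real and \<mu> :: "real measure"
  assumes "0 < \<beta>" "0 \<le> \<gamma>" "0 \<le> q" "q < s" "sets \<mu> = sets borel" "finite_measure \<mu>"
  shows "log_carleson \<gamma> s \<mu> \<longleftrightarrow>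
      (SUP w\<in>ball (0::complex) 1. \<integral>\<^sup>+ t\<in>{0..<1}.
         ennreal ((1 - cmod w) powr \<beta> * (ln (exp 1 / (1 - cmod w))) powr \<gamma> /
                  ((1 - t) powr q * (1 - cmod w * t) powr (s + \<beta> - q))) \<partial>\<mu>) < \<infinity>"
proof (subst SUP_ball_norm_lt_top_iff, rule log_carleson_iff_kernel_bounded[OF assms])
  fix r t :: real assume r: "r \<in> {0..<1}" and t: "t \<in> {0..<1}"
  show "0 \<le> ln (exp 1 / (1 - r)) \<and> ln (exp 1 / (1 - r)) \<le> ln (exp 1 / (1 - r)) + ln (exp 1 / (1 - t))"
    using one_le_ln_exp_div_one_minus[OF r] one_le_ln_exp_div_one_minus[OF t] by linarith
qed simp

lemma log_carleson_iff_SUP_log_point_kernel: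
  fixes \<beta> \<gamma> q s :: real and \<mu> :: "real measure"
  assumes "0 < \<beta>" "0 \<le> \<gamma>" "0 \<le> q" "q < s" "sets \<mu> = sets borel" "finite_measure \<mu>"
  shows "log_carleson \<gamma> s \<mu> \<longleftrightarrow>
      (SUP w\<in>ball (0::complex) 1. \<integral>\<^sup>+ t\<in>{0..<1}.
         ennreal ((1 - cmod w) powr \<beta> * (ln (exp 1 / (1 - t))) powr \<gamma> /
                  ((1 - t) powr q * (1 - cmod w * t) powr (s + \<beta> - q))) \<partial>\<mu>) < \<infinity>"
proof (subst SUP_ball_norm_lt_top_iff, rule log_carleson_iff_kernel_bounded[OF assms])
  fix r t :: real assume r: "r \<in> {0..<1}" and t: "t \<in> {0..<1}"
  show "0 \<le> ln (exp 1 / (1 - t)) \<and> ln (exp 1 / (1 - t)) \<le> ln (exp 1 / (1 - r)) + ln (exp 1 / (1 - t))"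
    using one_le_ln_exp_div_one_minus[OF r] one_le_ln_exp_div_one_minus[OF t] by linarith
next
  fix r t :: real assume "0 \<le> r" "r \<le> t" "t < 1"
  then show "ln (exp 1 / (1 - r)) \<le> ln (exp 1 / (1 - t))"
    by (intro ln_exp_div_antimono) auto
qed

lemma norm_one_minus_mult_of_real_ge: "1 - cmod w * \<bar>t\<bar> \<le> cmod (1 - w * complex_of_real t)"
proof -
  have "cmod 1 - cmod (w * complex_of_real t) \<le> cmod (1 - w * complex_of_real t)"
    by (rule norm_triangle_ineq2)
  then show ?thesis
    by (simp add: norm_mult)
qed

lemma complex_kernel_le_radial_kernel:
  fixes w :: complex and a t q e :: real
  assumes "cmod w < 1" "0 \<le> t" "t < 1" "0 \<le> a" "0 \<le> e"
  shows "a / ((1 - t) powr q * cmod (1 - w * complex_of_real t) powr e)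
    \<le> a / ((1 - t) powr q * (1 - cmod w * t) powr e)"
proof -
  have "cmod w * t \<le> t"
    using assms by (simp add: mult_left_le_one_le)
  then have "0 < 1 - cmod w * t"
    using assms by linarith
  moreover have "1 - cmod w * t \<le> cmod (1 - w * complex_of_real t)"
    using norm_one_minus_mult_of_real_ge[of w t] assms by simp
  ultimately show ?thesis
    using assms by (intro divide_left_mono mult_left_mono powr_mono2 mult_pos_pos) auto
qed

lemma log_carleson_iff_SUP_complex_kernel:
  fixes \<beta> \<gamma> q s :: real and \<mu> :: "real measure"
  assumes "0 < \<beta>" "0 \<le> \<gamma>" "0 \<le> q" "q < s" and sets: "sets \<mu> = sets borel" and fm: "finite_measure \<mu>"
  shows "log_carleson \<gamma> s \<mu> \<longleftrightarrow>
      (SUP w\<in>ball (0::complex) 1. \<integral>\<^sup>+ t\<in>{0..<1}.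
         ennreal ((1 - cmod w) powr \<beta> * (ln (exp 1 / (1 - cmod w))) powr \<gamma> /
                  ((1 - t) powr q * (cmod (1 - w * complex_of_real t)) powr (s + \<beta> - q))) \<partial>\<mu>) < \<infinity>"
    (is "_ \<longleftrightarrow> (SUP w\<in>_. ?I w) < \<infinity>")
proof
  let ?J = "\<lambda>w. \<integral>\<^sup>+ t\<in>{0..<1}. ennreal ((1 - cmod w) powr \<beta> * (ln (exp 1 / (1 - cmod w))) powr \<gamma> /
                  ((1 - t) powr q * (1 - cmod w * t) powr (s + \<beta> - q))) \<partial>\<mu>"
  assume "log_carleson \<gamma> s \<mu>"
  then obtain M where M: "\<And>w. w \<in> ball 0 1 \<Longrightarrow> ?J w \<le> ennreal M"
    using log_carleson_iff_SUP_radial_kernel[OF assms] unfolding SUP_lt_top_iff_bounded by blast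
  have "?I w \<le> ennreal M" if "w \<in> ball 0 1" for w
  proof -
    have "?I w \<le> ?J w"
      using that assms by (intro nn_integral_mono)
        (auto split: split_indicator intro!: ennreal_leI complex_kernel_le_radial_kernel)
    then show ?thesis
      using M[OF that] by (rule order_trans)
  qed
  then show "(SUP w\<in>ball 0 1. ?I w) < \<infinity>"
    unfolding SUP_lt_top_iff_bounded by blast
next
  assume "(SUP w\<in>ball 0 1. ?I w) < \<infinity>"
  then obtain M where M: "\<And>w. w \<in> ball 0 1 \<Longrightarrow> ?I w \<le> ennreal M"
    unfolding SUP_lt_top_iff_bounded by blast
  show "log_carleson \<gamma> s \<mu>"
  proof (rule kernel_bounded_imp_log_carleson[OF _ _ sets fm])
    fix r :: real assume "r \<in> {0..<1}"
    then show "?I (complex_of_real r) \<le> ennreal M"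
      by (intro M) simp
  next
    fix r t :: real assume "0 \<le> r" "r \<le> t" "t < 1"
    then have "r * t < 1"
      using mult_left_le_one_le[of t r] by linarith
    then have "cmod (1 - complex_of_real r * complex_of_real t) = 1 - r * t"
      by (metis abs_of_pos diff_gt_0_iff_gt norm_of_real of_real_1 of_real_diff of_real_mult)
    then show "(1 - r) powr \<beta> * ln (exp 1 / (1 - r)) powr \<gamma> / ((1 - t) powr q * (1 - r * t) powr (s + \<beta> - q))
      \<le> (1 - cmod (complex_of_real r)) powr \<beta> * (ln (exp 1 / (1 - cmod (complex_of_real r)))) powr \<gamma> /
        ((1 - t) powr q * (cmod (1 - complex_of_real r * complex_of_real t)) powr (s + \<beta> - q))"
      using \<open>0 \<le> r\<close> by simp
  qed (use assms in auto)
qed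

theorem proposition3p1:
  fixes \<beta> \<gamma> q s :: real and \<mu> :: "real measure"
  assumes "\<beta> > 0" and "\<gamma> \<ge> 0" and "0 \<le> q" and "q < s"
    and "fin_borel_measure_on_01 \<mu>"
  shows "(log_carleson \<gamma> s \<mu> \<longleftrightarrow>
      (SUP w\<in>ball (0::complex) 1. \<integral>\<^sup>+ t\<in>{0..<1}.
         ennreal ((1 - cmod w) powr \<beta> * (ln (exp 1 / (1 - cmod w))) powr \<gamma> /
                  ((1 - t) powr q * (1 - cmod w * t) powr (s + \<beta> - q))) \<partial>\<mu>) < \<infinity>)
    \<and> (log_carleson \<gamma> s \<mu> \<longleftrightarrow>
      (SUP w\<in>ball (0::complex) 1. \<integral>\<^sup>+ t\<in>{0..<1}.
         ennreal ((1 - cmod w) powr \<beta> * (ln (exp 1 / (1 - cmod w))) powr \<gamma> /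
                  ((1 - t) powr q * (cmod (1 - w * complex_of_real t)) powr (s + \<beta> - q))) \<partial>\<mu>) < \<infinity>)
    \<and> (log_carleson \<gamma> s \<mu> \<longleftrightarrow>
      (SUP w\<in>ball (0::complex) 1. \<integral>\<^sup>+ t\<in>{0..<1}.
         ennreal ((1 - cmod w) powr \<beta> * (ln (exp 1 / (1 - t))) powr \<gamma> /
                  ((1 - t) powr q * (1 - cmod w * t) powr (s + \<beta> - q))) \<partial>\<mu>) < \<infinity>)"
proof -
  have \<mu>: "sets \<mu> = sets borel" "finite_measure \<mu>"
    using assms(5) by (simp_all add: fin_borel_measure_on_01_def)
  show ?thesis
    by (intro conjI log_carleson_iff_SUP_radial_kernel[OF assms(1-4) \<mu>]
        log_carleson_iff_SUP_complex_kernel[OF assms(1-4) \<mu>]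
        log_carleson_iff_SUP_log_point_kernel[OF assms(1-4) \<mu>])
qed

end
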